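(* Let $\Theta=(\alpha,\rho_r,\rho_d,\rho_s,\rho_0,T)$ with $\alpha>1$, $\rho_r,\rho_d,\rho_s,\rho_0>0$, $T>1$, and $K_{max}(\Theta):=\min\big(\frac T4,\frac{\rho_r}{3\rho_0},\frac{3\rho_d}{2\rho_0}\big)>10$. Then for every $R>0$: (i) $R<R_{max}(\Theta)\iff \frac{R}{x'(R,\Theta)}<K_{max}(\Theta)\iff K'_{csi}(R,\Theta)<K_{max}(\Theta)$; (ii) $\rho_r<\frac{\alpha}{(1+\rho_d/\rho_r)^2}\frac{g^2(R)}{R}$ holds if and only if $K'_{csi}(R,\Theta)>1$.
   Context: $g(x)=\sqrt{\frac{x}{2^x-1}}\big(2^x x\ln2-2^x+1\big)$, $x>0$. $x'(R,\Theta)>0$ is the unique solution of $g(x')=(1+\rho_d/\rho_r)\sqrt{R\rho_r/\alpha}$. $R_{max}(\Theta)=c(\Theta)K_{max}(\Theta)$ where $c(\Theta)>0$ is the unique positive solution of $g(c)/\sqrt c=(1+\rho_d/\rho_r)\sqrt{K_{max}(\Theta)\rho_r/\alpha}$. For real $M>K\ge1$, $\frac{1}{\zeta_{csi}(M,K,R,\Theta)}=\frac1R\big[\frac{\alpha K}{M-K}(2^{R/K}-1)+M\rho_r+K\rho_d+\rho_s\big]$, and $K'_{csi}(R,\Theta)$ is the $K$-component of the (unique) maximizer of $\zeta_{csi}$ over real $(M,K)$ with $1\le K\le K_{max}(\Theta)$, $M>K$. *)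

theory Defs
  imports "HOL-Analysis.Analysis"
begin

definition g :: "real \<Rightarrow> real" where
  "g x = sqrt (x / (2 powr x - 1)) * (2 powr x * x * ln 2 - 2 powr x + 1)"

definition Kmax :: "real \<Rightarrow> real \<Rightarrow> real \<Rightarrow> real \<Rightarrow> real" where
  "Kmax rho_r rho_d rho_0 T = min (T / 4) (min (rho_r / (3 * rho_0)) (3 * rho_d / (2 * rho_0)))"

definition xprime :: "real \<Rightarrow> real \<Rightarrow> real \<Rightarrow> real \<Rightarrow> real" where
  "xprime alpha rho_r rho_d R =
     (THE x. x > 0 \<and> g x = (1 + rho_d / rho_r) * sqrt (R * rho_r / alpha))"

definition cTheta :: "real \<Rightarrow> real \<Rightarrow> real \<Rightarrow> real \<Rightarrow> real \<Rightarrow> real" where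
  "cTheta alpha rho_r rho_d rho_0 T =
     (THE c. c > 0 \<and> g c / sqrt c =
        (1 + rho_d / rho_r) * sqrt (Kmax rho_r rho_d rho_0 T * rho_r / alpha))"

definition Rmax :: "real \<Rightarrow> real \<Rightarrow> real \<Rightarrow> real \<Rightarrow> real \<Rightarrow> real" where
  "Rmax alpha rho_r rho_d rho_0 T = cTheta alpha rho_r rho_d rho_0 T * Kmax rho_r rho_d rho_0 T"

text \<open>zeta_csi(M,K,R,Theta), via its reciprocal as in the paper.\<close>
definition zeta_csi :: "real \<Rightarrow> real \<Rightarrow> real \<Rightarrow> real \<Rightarrow> real \<Rightarrow> real \<Rightarrow> real \<Rightarrow> real" where
  "zeta_csi alpha rho_r rho_d rho_s M K R =
     1 / ((1 / R) * (alpha * K / (M - K) * (2 powr (R / K) - 1)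
                     + M * rho_r + K * rho_d + rho_s))"

definition csi_feasible :: "real \<Rightarrow> real \<times> real \<Rightarrow> bool" where
  "csi_feasible km p = (1 \<le> snd p \<and> snd p \<le> km \<and> fst p > snd p)"

definition Kcsi :: "real \<Rightarrow> real \<Rightarrow> real \<Rightarrow> real \<Rightarrow> real \<Rightarrow> real \<Rightarrow> real \<Rightarrow> real" where
  "Kcsi alpha rho_r rho_d rho_s rho_0 T R =
     snd (THE p. csi_feasible (Kmax rho_r rho_d rho_0 T) p \<and>
        (\<forall>q. csi_feasible (Kmax rho_r rho_d rho_0 T) q \<longrightarrow>
           zeta_csi alpha rho_r rho_d rho_s (fst q) (snd q) R
             \<le> zeta_csi alpha rho_r rho_d rho_s (fst p) (snd p) R))"

end

theory Submission
  imports Defs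
begin

text \<open>
  With \<open>u = x ln 2\<close> one has \<open>g x = sqrt x * psi u\<close>, where
  \<open>psi u = (u e\<^sup>u - e\<^sup>u + 1) / sqrt (e\<^sup>u - 1)\<close> is strictly increasing and runs from \<open>0\<close>
  to \<open>\<infinity>\<close>. Hence \<open>g\<close> and \<open>g x / sqrt x\<close> are increasing bijections of the positive
  reals, so \<open>x'\<close> and \<open>c(\<Theta>)\<close> exist, and comparisons of their values are comparisons of
  their arguments; \<open>R < R\<^sub>m\<^sub>a\<^sub>x\<close> and the bound on \<open>\<rho>\<^sub>r\<close> both reduce in this way to
  comparisons with \<open>x'\<close>.

  For fixed \<open>K\<close>, AM-GM in \<open>t = M - K\<close> minimises the denominator of \<open>1/\<zeta>\<^sub>c\<^sub>s\<^sub>i\<close> over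
  \<open>M\<close>. The reduced function of \<open>K\<close> has derivative
  \<open>sqrt (\<alpha> \<rho>\<^sub>r / R) * (g x' - g (R / K))\<close>, which changes sign exactly at \<open>K = R / x'\<close>.
  So the unique maximiser has \<open>K'\<^sub>c\<^sub>s\<^sub>i = max 1 (min (R / x') K\<^sub>m\<^sub>a\<^sub>x)\<close>, from which both
  claims follow.
\<close>

definition psi :: "real \<Rightarrow> real" where
  "psi u = (u * exp u - exp u + 1) / sqrt (exp u - 1)"

lemma psi_numerator_pos: "0 < u \<Longrightarrow> 0 < u * exp u - exp u + (1::real)"
proof -
  assume "0 < u"
  then have "1 - u < exp (- u)" by (simp add: exp_minus_greater)
  then have "exp u * (1 - u) < 1" by (simp add: exp_minus field_simps)
  then show ?thesis by (simp add: algebra_simps)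
qed

lemma psi_pos: "0 < u \<Longrightarrow> 0 < psi u"
  unfolding psi_def by (simp add: psi_numerator_pos)

lemma psi_has_derivative:
  assumes "0 < u"
  shows "(psi has_real_derivative
     exp u * (2 * u * (exp u - 1) - (u * exp u - exp u + 1)) / (2 * (exp u - 1) * sqrt (exp u - 1))) (at u)"
proof -
  have "0 < exp u - 1" using assms by simp
  then show ?thesis unfolding psi_def[abs_def]
    by (auto intro!: derivative_eq_intros simp: field_simps power2_eq_square)
qed

lemma psi_strict_mono: "strict_mono_on {0<..} psi"
proof (rule strict_mono_onI)
  fix a b :: real
  assume "a \<in> {0<..}" "a < b"
  show "psi a < psi b"
  proof (rule DERIV_pos_imp_increasing[OF \<open>a < b\<close>])
    fix u assume "a \<le> u"
    with \<open>a \<in> {0<..}\<close> have u: "0 < u" by simp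
    have "1 + u < exp u" using exp_minus_greater[of "- u"] u by simp
    then have "0 < (u + 1) * (exp u - 1 - u) + u\<^sup>2" using u by (simp add: add_pos_nonneg)
    also have "\<dots> = 2 * u * (exp u - 1) - (u * exp u - exp u + 1)"
      by (simp add: algebra_simps power2_eq_square)
    finally have "0 < exp u * (2 * u * (exp u - 1) - (u * exp u - exp u + 1))
                     / (2 * (exp u - 1) * sqrt (exp u - 1))"
      using u by simp
    with psi_has_derivative[OF u] show "\<exists>y. (psi has_real_derivative y) (at u) \<and> 0 < y"
      by blast
  qed
qed

lemma psi_le_self:
  assumes "0 < u" "u \<le> 1"
  shows "psi u \<le> u"
proof -
  have "(1 + u/2)\<^sup>2 \<le> (exp (u/2))\<^sup>2"
    using assms by (intro power_mono) auto
  also have "\<dots> = exp u" by (simp add: power2_eq_square flip: exp_add)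
  finally have "1 + u + u\<^sup>2/4 \<le> exp u" by (simp add: power2_eq_square field_simps)
  then have "(1 + u + u\<^sup>2/4) * (1 - u) \<le> exp u * (1 - u)"
    using assms by (intro mult_right_mono) auto
  moreover have "u ^ 3 \<le> u\<^sup>2" using assms by (simp add: power_decreasing)
  moreover have "(1 + u + u\<^sup>2/4) * (1 - u) = 1 - 3/4 * u\<^sup>2 - u ^ 3 / 4"
    by (simp add: field_simps power2_eq_square power3_eq_cube)
  ultimately have numerator: "u * exp u - exp u + 1 \<le> u\<^sup>2" by (simp add: algebra_simps)
  have "u \<le> exp u - 1" using exp_ge_add_one_self[of u] by linarith
  then have "sqrt u \<le> sqrt (exp u - 1)" by simp
  then have "psi u \<le> u\<^sup>2 / sqrt u"
    unfolding psi_def using numerator psi_numerator_pos[of u] assms by (intro frac_le) auto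
  also have "\<dots> = u * sqrt u"
    using assms by (simp add: field_simps power2_eq_square)
  also have "\<dots> \<le> u" using assms by (simp add: mult_left_le)
  finally show ?thesis .
qed

lemma half_le_psi:
  assumes "2 \<le> u"
  shows "u / 2 \<le> psi u"
proof -
  have "2 * exp u \<le> u * exp u" using assms by (intro mult_right_mono) auto
  then have numerator: "exp u \<le> u * exp u - exp u + 1" by linarith
  have "sqrt (exp u - 1) \<le> sqrt ((exp (u/2))\<^sup>2)"
    by (simp add: power2_eq_square flip: exp_add)
  then have "exp u / exp (u/2) \<le> psi u"
    unfolding psi_def using numerator assms by (intro frac_le) auto
  moreover have "exp u / exp (u/2) = exp (u/2)" by (simp flip: exp_diff)
  ultimately show ?thesis using exp_gt_self[of "u/2"] by simp
qed

lemma g_eq_psi: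
  assumes "0 < x"
  shows "g x = sqrt x * psi (ln 2 * x)"
proof -
  have "2 powr x = exp (ln 2 * x)" by (simp add: powr_def mult.commute)
  moreover have "0 < sqrt (exp (ln 2 * x) - 1)" using assms by simp
  ultimately show ?thesis
    unfolding g_def psi_def by (simp add: real_sqrt_divide divide_simps ac_simps)
qed

lemma g_div_sqrt_eq_psi: "0 < x \<Longrightarrow> g x / sqrt x = psi (ln 2 * x)"
  by (simp add: g_eq_psi)

lemma g_pos: "0 < x \<Longrightarrow> 0 < g x"
  by (simp add: g_eq_psi psi_pos)

lemma g_div_sqrt_strict_mono: "strict_mono_on {0<..} (\<lambda>x. g x / sqrt x)"
  by (rule strict_mono_onI)
    (simp add: g_div_sqrt_eq_psi strict_mono_on_less[OF psi_strict_mono])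

lemma g_strict_mono: "strict_mono_on {0<..} g"
proof (rule strict_mono_onI)
  fix a b :: real
  assume "a \<in> {0<..}" "a < b"
  then have "sqrt a * (g a / sqrt a) < sqrt b * (g b / sqrt b)"
    using strict_mono_onD[OF g_div_sqrt_strict_mono] g_pos[of a]
    by (intro mult_strict_mono) auto
  with \<open>a \<in> {0<..}\<close> \<open>a < b\<close> show "g a < g b" by simp
qed

lemma g_continuous_on: "continuous_on {0<..} g"
  unfolding g_def[abs_def] by (intro continuous_intros) auto

lemma g_div_sqrt_continuous_on: "continuous_on {0<..} (\<lambda>x. g x / sqrt x)"
  by (intro continuous_intros g_continuous_on) auto

lemma g_small_point:
  assumes "0 < v"
  obtains a where "0 < a" "g a < v" "g a / sqrt a < v"
proof
  define a where "a = min (1/2) (v/2)"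
  have a: "0 < a" "a \<le> 1/2" "a < v" using assms by (auto simp: a_def)
  have "0 < ln 2 * a" "ln 2 * a \<le> a" using a ln_2_less_1 by (simp_all add: mult_left_le_one_le)
  moreover from this have "psi (ln 2 * a) \<le> ln 2 * a"
    by (intro psi_le_self) (use a in linarith)+
  ultimately have psi_a: "psi (ln 2 * a) < v" using a by linarith
  show "0 < a" by fact
  show "g a / sqrt a < v" using psi_a a by (simp add: g_div_sqrt_eq_psi)
  have "g a \<le> psi (ln 2 * a)"
    using a psi_pos[of "ln 2 * a"] by (simp add: g_eq_psi mult_left_le_one_le)
  with psi_a show "g a < v" by simp
qed

lemma g_large_point:
  assumes "0 < v"
  obtains b where "0 < b" "v < g b" "v < g b / sqrt b"
proof
  define b where "b = (2 + 2 * v) / ln 2 + 1"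
  have b: "1 \<le> b" using assms by (simp add: b_def)
  have "ln 2 * b = 2 + 2 * v + ln 2" by (simp add: b_def field_simps)
  then have psi_b: "v < psi (ln 2 * b)"
    using half_le_psi[of "ln 2 * b"] assms ln_gt_zero[of 2] by linarith
  show "0 < b" using b by simp
  show "v < g b / sqrt b" using psi_b b by (simp add: g_div_sqrt_eq_psi)
  have "psi (ln 2 * b) \<le> g b"
    using b psi_pos[of "ln 2 * b"] by (simp add: g_eq_psi)
  with psi_b show "v < g b" by simp
qed

lemma strict_mono_on_continuous_ex1:
  fixes f :: "real \<Rightarrow> real"
  assumes mono: "strict_mono_on {0<..} f" and cont: "continuous_on {0<..} f"
    and "0 < a" "0 < b" "f a < v" "v < f b"
  shows "\<exists>!x. 0 < x \<and> f x = v"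
proof -
  have "a \<le> b" using strict_mono_on_less[OF mono, of a b] assms by simp
  moreover have "continuous_on {a..b} f"
    using cont by (rule continuous_on_subset) (use assms in auto)
  ultimately obtain x where "a \<le> x" "f x = v"
    using IVT'[of f a v b] assms by auto
  with \<open>0 < a\<close> have "0 < x \<and> f x = v" by simp
  then show ?thesis using strict_mono_on_eqD[OF mono] by auto
qed

lemma g_ex1: "0 < v \<Longrightarrow> \<exists>!x. 0 < x \<and> g x = v"
  by (rule g_small_point, assumption, rule g_large_point, assumption,
      rule strict_mono_on_continuous_ex1[OF g_strict_mono g_continuous_on])

lemma g_div_sqrt_ex1: "0 < v \<Longrightarrow> \<exists>!x. 0 < x \<and> g x / sqrt x = v"
  by (rule g_small_point, assumption, rule g_large_point, assumption,
      rule strict_mono_on_continuous_ex1[OF g_div_sqrt_strict_mono g_div_sqrt_continuous_on])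

lemma am_gm_div_mult:
  fixes A r t :: real
  assumes "0 < A" "0 < r" "0 < t"
  shows "2 * sqrt (A * r) \<le> A / t + r * t"
    and "A / t + r * t = 2 * sqrt (A * r) \<longleftrightarrow> t = sqrt (A / r)"
proof -
  have "(sqrt A - sqrt r * t)\<^sup>2 = A - 2 * sqrt (A * r) * t + r * t\<^sup>2"
    using assms by (simp add: power2_eq_square algebra_simps real_sqrt_mult)
  then have gap: "A / t + r * t - 2 * sqrt (A * r) = (sqrt A - sqrt r * t)\<^sup>2 / t"
    using assms by (simp add: field_simps power2_eq_square)
  then show "2 * sqrt (A * r) \<le> A / t + r * t"
    using assms by (metis diff_ge_0_iff_ge divide_nonneg_pos zero_le_power2)
  have "A / t + r * t = 2 * sqrt (A * r) \<longleftrightarrow> sqrt A = sqrt r * t"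
    using gap assms by auto
  also have "\<dots> \<longleftrightarrow> t = sqrt (A / r)"
    using assms by (auto simp: field_simps real_sqrt_divide)
  finally show "A / t + r * t = 2 * sqrt (A * r) \<longleftrightarrow> t = sqrt (A / r)" .
qed

lemma clamp_unique_argmin:
  fixes f f' :: "real \<Rightarrow> real"
  assumes deriv: "\<And>k. a \<le> k \<Longrightarrow> k \<le> b \<Longrightarrow> (f has_real_derivative f' k) (at k)"
    and decreasing: "\<And>k. a \<le> k \<Longrightarrow> k < c \<Longrightarrow> f' k < 0"
    and increasing: "\<And>k. c < k \<Longrightarrow> k \<le> b \<Longrightarrow> 0 < f' k"
    and "a \<le> b" "a \<le> k" "k \<le> b" "k \<noteq> max a (min c b)"
  shows "f (max a (min c b)) < f k"
proof -
  define k0 where "k0 = max a (min c b)"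
  have "f k0 < f k"
  proof -
  have "a \<le> k0" "k0 \<le> b" using \<open>a \<le> b\<close> by (auto simp: k0_def)
  consider (above) "k0 < k" | (below) "k < k0" using \<open>k \<noteq> _\<close> unfolding k0_def[symmetric] by linarith
  then show ?thesis
  proof cases
    case above
    then have "c \<le> k0" using \<open>k \<le> b\<close> by (auto simp: k0_def)
    obtain z where "k0 < z" "z < k" "f k - f k0 = (k - k0) * f' z"
      using MVT2[OF above, of f f'] deriv \<open>a \<le> k0\<close> \<open>k \<le> b\<close> by force
    moreover have "0 < f' z" using calculation \<open>c \<le> k0\<close> \<open>k \<le> b\<close> by (intro increasing) auto
    moreover from this above have "0 < (k - k0) * f' z" by simp
    ultimately show ?thesis by linarith
  next
    case below
    then have "k0 \<le> c" using \<open>a \<le> k\<close> by (auto simp: k0_def)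
    obtain z where "k < z" "z < k0" "f k0 - f k = (k0 - k) * f' z"
      using MVT2[OF below, of f f'] deriv \<open>a \<le> k\<close> \<open>k0 \<le> b\<close> by force
    moreover have "f' z < 0" using calculation \<open>k0 \<le> c\<close> \<open>a \<le> k\<close> by (intro decreasing) auto
    moreover from this below have "(k0 - k) * f' z < 0" by (simp add: mult_pos_neg)
    ultimately show ?thesis by linarith
  qed
  qed
  then show ?thesis by (simp add: k0_def)
qed

lemma the_unique_maximizer:
  fixes F :: "'a \<Rightarrow> 'b::linorder"
  assumes "P p" and "\<And>q. P q \<Longrightarrow> q \<noteq> p \<Longrightarrow> F q < F p"
  shows "(THE p. P p \<and> (\<forall>q. P q \<longrightarrow> F q \<le> F p)) = p"
  using assms by (intro the_equality) (auto intro: less_imp_le, meson not_le)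

lemma sqrt_mult_powr_has_derivative:
  assumes "0 < R" "0 < K"
  shows "((\<lambda>K. sqrt (K * (2 powr (R / K) - 1))) has_real_derivative - g (R / K) / (2 * sqrt R)) (at K)"
proof -
  define x where "x = R / K"
  define P where "P = 2 powr x"
  have x: "0 < x" and P: "1 < P" using assms by (simp_all add: x_def P_def)
  have "((\<lambda>K. sqrt (K * (2 powr (R / K) - 1))) has_real_derivative
          (P - 1 - x * P * ln 2) / (2 * sqrt (K * (P - 1)))) (at K)"
    using assms P unfolding x_def P_def powr_def
    by (auto intro!: derivative_eq_intros simp: field_simps power2_eq_square mult_less_0_iff)
  also have "sqrt (K * (P - 1)) = sqrt R / sqrt (x / (P - 1))"
    using assms by (simp add: x_def real_sqrt_divide field_simps flip: real_sqrt_mult)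
  also have "(P - 1 - x * P * ln 2) / (2 * (sqrt R / sqrt (x / (P - 1)))) = - g x / (2 * sqrt R)"
    using x P unfolding g_def P_def[symmetric] by (simp add: field_simps)
  finally show ?thesis unfolding x_def .
qed

locale csi_parameters =
  fixes alpha rho_r rho_d rho_s R :: real
  assumes al_pos: "0 < alpha" and rr_pos: "0 < rho_r" and rd_nonneg: "0 \<le> rho_d"
    and rs_nonneg: "0 \<le> rho_s" and R_pos: "0 < R"
begin

abbreviation xp :: real where
  "xp \<equiv> xprime alpha rho_r rho_d R"

lemma xprime: "0 < xp" "g xp = (1 + rho_d / rho_r) * sqrt (R * rho_r / alpha)"
proof -
  have "0 < (1 + rho_d / rho_r) * sqrt (R * rho_r / alpha)"
    using al_pos rr_pos rd_nonneg R_pos by (simp add: add_pos_nonneg)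
  from theI'[OF g_ex1[OF this]] show "0 < xp" "g xp = (1 + rho_d / rho_r) * sqrt (R * rho_r / alpha)"
    unfolding xprime_def by auto
qed

lemma sqrt_scaled_g_xprime: "sqrt (alpha * rho_r / R) * g xp = rho_r + rho_d"
proof -
  have "sqrt (alpha * rho_r / R) * sqrt (R * rho_r / alpha) = sqrt (rho_r\<^sup>2)"
    using al_pos R_pos by (simp add: power2_eq_square field_simps flip: real_sqrt_mult)
  then show ?thesis using rr_pos by (simp add: xprime(2) field_simps)
qed

definition denominator :: "real \<Rightarrow> real \<Rightarrow> real" where
  "denominator M K = alpha * K / (M - K) * (2 powr (R / K) - 1) + M * rho_r + K * rho_d + rho_s"

definition reduced_denominator :: "real \<Rightarrow> real" where
  "reduced_denominator K = 2 * sqrt (alpha * rho_r) * sqrt (K * (2 powr (R / K) - 1)) + K * (rho_r + rho_d) + rho_s"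

definition optimal_M :: "real \<Rightarrow> real" where
  "optimal_M K = K + sqrt (alpha * K * (2 powr (R / K) - 1) / rho_r)"

lemma zeta_csi_eq: "zeta_csi alpha rho_r rho_d rho_s M K R = R / denominator M K"
  unfolding zeta_csi_def denominator_def by simp

lemma reduced_denominator_pos: "0 < K \<Longrightarrow> 0 < reduced_denominator K"
  unfolding reduced_denominator_def using rr_pos rd_nonneg rs_nonneg R_pos al_pos
  by (intro add_nonneg_pos add_pos_nonneg) auto

lemma optimal_M_gt: "0 < K \<Longrightarrow> K < optimal_M K"
  unfolding optimal_M_def using al_pos rr_pos R_pos by simp

lemma denominator_ge:
  assumes "0 < K" "K < M"
  shows "reduced_denominator K \<le> denominator M K"
    and "denominator M K = reduced_denominator K \<longleftrightarrow> M = optimal_M K"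
proof -
  define A where "A = alpha * K * (2 powr (R / K) - 1)"
  have "0 < A" using assms al_pos R_pos by (simp add: A_def)
  have "sqrt (A * rho_r) = sqrt (alpha * rho_r) * sqrt (K * (2 powr (R / K) - 1))"
    by (simp add: A_def ac_simps flip: real_sqrt_mult)
  moreover have "denominator M K = A / (M - K) + rho_r * (M - K) + K * (rho_r + rho_d) + rho_s"
    unfolding denominator_def A_def by (simp only: times_divide_eq_left) (simp add: algebra_simps)
  ultimately have "denominator M K - reduced_denominator K = A / (M - K) + rho_r * (M - K) - 2 * sqrt (A * rho_r)"
    unfolding reduced_denominator_def by simp
  moreover note am_gm_div_mult[OF \<open>0 < A\<close> rr_pos, of "M - K"]
  ultimately show "reduced_denominator K \<le> denominator M K"
    and "denominator M K = reduced_denominator K \<longleftrightarrow> M = optimal_M K"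
    using assms by (auto simp: optimal_M_def A_def)
qed

lemma reduced_denominator_has_derivative:
  assumes "0 < K"
  shows "(reduced_denominator has_real_derivative sqrt (alpha * rho_r / R) * (g xp - g (R / K))) (at K)"
proof -
  have "(reduced_denominator has_real_derivative
          2 * sqrt (alpha * rho_r) * (- g (R / K) / (2 * sqrt R)) + (rho_r + rho_d)) (at K)"
    unfolding reduced_denominator_def[abs_def]
    using DERIV_add[OF DERIV_add[OF DERIV_cmult[OF sqrt_mult_powr_has_derivative[OF R_pos assms],
          where c = "2 * sqrt (alpha * rho_r)"] DERIV_cmult_right[OF DERIV_ident, where c = "rho_r + rho_d"]]
          DERIV_const[where k = rho_s]]
    by simp
  also have "2 * sqrt (alpha * rho_r) * (- g (R / K) / (2 * sqrt R)) + (rho_r + rho_d)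
               = sqrt (alpha * rho_r / R) * (g xp - g (R / K))"
    using sqrt_scaled_g_xprime R_pos by (simp add: real_sqrt_divide field_simps)
  finally show ?thesis .
qed

lemma reduced_denominator_unique_argmin:
  assumes "1 \<le> km" "1 \<le> K" "K \<le> km" "K \<noteq> max 1 (min (R / xp) km)"
  shows "reduced_denominator (max 1 (min (R / xp) km)) < reduced_denominator K"
proof (rule clamp_unique_argmin[OF reduced_denominator_has_derivative])
  have scale: "0 < sqrt (alpha * rho_r / R)" using al_pos rr_pos R_pos by simp
  show "sqrt (alpha * rho_r / R) * (g xp - g (R / k)) < 0" if "1 \<le> k" "k < R / xp" for k
  proof -
    have "xp < R / k" using that xprime(1) by (simp add: field_simps)
    then have "g xp < g (R / k)"
      using strict_mono_onD[OF g_strict_mono] xprime(1) by simp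
    with scale show ?thesis by (simp add: mult_pos_neg)
  qed
  show "0 < sqrt (alpha * rho_r / R) * (g xp - g (R / k))" if "R / xp < k" "k \<le> km" for k
  proof -
    have "0 < k" using that divide_pos_pos[OF R_pos xprime(1)] by linarith
    then have "R / k < xp" using that xprime(1) by (simp add: field_simps)
    then have "g (R / k) < g xp"
      using strict_mono_onD[OF g_strict_mono] R_pos \<open>0 < k\<close> by simp
    with scale show ?thesis by simp
  qed
qed (use assms in auto)

lemma csi_maximizer:
  assumes "1 \<le> km"
  defines "K0 \<equiv> max 1 (min (R / xp) km)"
  shows "(THE p. csi_feasible km p \<and>
            (\<forall>q. csi_feasible km q \<longrightarrow>
               zeta_csi alpha rho_r rho_d rho_s (fst q) (snd q) R \<le> zeta_csi alpha rho_r rho_d rho_s (fst p) (snd p) R))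
         = (optimal_M K0, K0)"
proof (rule the_unique_maximizer[where F = "\<lambda>p. zeta_csi alpha rho_r rho_d rho_s (fst p) (snd p) R"])
  have "1 \<le> K0" "K0 \<le> km" using assms by (auto simp: K0_def)
  then show "csi_feasible km (optimal_M K0, K0)"
    by (simp add: csi_feasible_def optimal_M_gt)
  have D0: "denominator (optimal_M K0) K0 = reduced_denominator K0"
    using denominator_ge(2) optimal_M_gt \<open>1 \<le> K0\<close> by simp
  fix q assume feasible: "csi_feasible km q" and "q \<noteq> (optimal_M K0, K0)"
  obtain M K where q: "q = (M, K)" "1 \<le> K" "K \<le> km" "K < M"
    using feasible by (cases q) (auto simp: csi_feasible_def)
  have "reduced_denominator K0 < denominator M K"
  proof (cases "K = K0")
    case True
    with q \<open>q \<noteq> _\<close> have "denominator M K \<noteq> reduced_denominator K"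
      using denominator_ge(2)[of K M] by auto
    with True q show ?thesis using denominator_ge(1)[of K M] by simp
  next
    case False
    then have "reduced_denominator K0 < reduced_denominator K"
      using reduced_denominator_unique_argmin assms q by (simp add: K0_def)
    with q show ?thesis using denominator_ge(1)[of K M] by simp
  qed
  moreover have "0 < reduced_denominator K0" using \<open>1 \<le> K0\<close> by (simp add: reduced_denominator_pos)
  ultimately show "zeta_csi alpha rho_r rho_d rho_s (fst q) (snd q) R
                     < zeta_csi alpha rho_r rho_d rho_s (fst (optimal_M K0, K0)) (snd (optimal_M K0, K0)) R"
    using q D0 R_pos by (simp add: zeta_csi_eq divide_strict_left_mono)
qed

lemma Kcsi_eq_clamp:
  assumes "1 \<le> Kmax rho_r rho_d r0 T"
  shows "Kcsi alpha rho_r rho_d rho_s r0 T R = max 1 (min (R / xp) (Kmax rho_r rho_d r0 T))"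
  unfolding Kcsi_def csi_maximizer[OF assms] by simp

lemma less_Rmax_iff:
  assumes "0 < Kmax rho_r rho_d r0 T"
  shows "R < Rmax alpha rho_r rho_d r0 T \<longleftrightarrow> R / xp < Kmax rho_r rho_d r0 T"
proof -
  define km where "km = Kmax rho_r rho_d r0 T"
  define c where "c = cTheta alpha rho_r rho_d r0 T"
  define v where "v = (1 + rho_d / rho_r) * sqrt (km * rho_r / alpha)"
  define y where "y = R / km"
  have "0 < km" "0 < y" using assms R_pos by (simp_all add: km_def y_def)
  have "0 < v" using al_pos rr_pos rd_nonneg \<open>0 < km\<close> by (simp add: v_def add_pos_nonneg)
  from theI'[OF g_div_sqrt_ex1[OF this]] have c: "0 < c" "g c / sqrt c = v"
    unfolding c_def cTheta_def km_def[symmetric] v_def by auto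
  have "sqrt y * sqrt (km * rho_r / alpha) = sqrt (R * rho_r / alpha)"
    using \<open>0 < km\<close> by (simp add: y_def field_simps flip: real_sqrt_mult)
  then have g_xp: "g xp = sqrt y * v" by (simp add: xprime(2) v_def)
  have "R < Rmax alpha rho_r rho_d r0 T \<longleftrightarrow> y < c"
    using \<open>0 < km\<close> by (simp add: Rmax_def y_def field_simps flip: c_def km_def)
  also have "\<dots> \<longleftrightarrow> g y / sqrt y < v"
    using strict_mono_on_less[OF g_div_sqrt_strict_mono, of y c] \<open>0 < y\<close> c by simp
  also have "\<dots> \<longleftrightarrow> g y < g xp"
    using \<open>0 < y\<close> by (simp add: g_xp pos_divide_less_eq mult.commute)
  also have "\<dots> \<longleftrightarrow> y < xp"
    using strict_mono_on_less[OF g_strict_mono] \<open>0 < y\<close> xprime(1) by simp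
  also have "\<dots> \<longleftrightarrow> R / xp < km"
    using \<open>0 < km\<close> xprime(1) by (simp add: y_def field_simps)
  finally show ?thesis by (simp add: km_def)
qed

lemma less_g_bound_iff: "rho_r < alpha / (1 + rho_d / rho_r)\<^sup>2 * (g R)\<^sup>2 / R \<longleftrightarrow> xp < R"
proof -
  define B where "B = 1 + rho_d / rho_r"
  have "0 < B" using rr_pos rd_nonneg by (simp add: B_def add_pos_nonneg)
  have "xp < R \<longleftrightarrow> g xp < g R"
    using strict_mono_on_less[OF g_strict_mono] xprime(1) R_pos by simp
  also have "\<dots> \<longleftrightarrow> (g xp)\<^sup>2 < (g R)\<^sup>2"
    using g_pos[OF xprime(1)] g_pos[OF R_pos] by (auto intro: power_strict_mono power_less_imp_less_base less_imp_le)
  also have "(g xp)\<^sup>2 = B\<^sup>2 * R * rho_r / alpha"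
    using R_pos rr_pos al_pos by (simp add: xprime(2) B_def power_mult_distrib)
  also have "B\<^sup>2 * R * rho_r / alpha < (g R)\<^sup>2 \<longleftrightarrow> rho_r < alpha / B\<^sup>2 * (g R)\<^sup>2 / R"
    using \<open>0 < B\<close> al_pos R_pos by (simp add: field_simps)
  finally show ?thesis by (simp add: B_def)
qed

end

theorem lemma5:
  fixes alpha rho_r rho_d rho_s rho_0 T :: real
  assumes "alpha > 1" and "rho_r > 0" and "rho_d > 0" and "rho_s > 0" and "rho_0 > 0"
    and "T > 1" and "Kmax rho_r rho_d rho_0 T > 10"
  shows "\<forall>R::real. R > 0 \<longrightarrow>
     ((R < Rmax alpha rho_r rho_d rho_0 T \<longleftrightarrow>
         R / xprime alpha rho_r rho_d R < Kmax rho_r rho_d rho_0 T) \<and>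
      (R / xprime alpha rho_r rho_d R < Kmax rho_r rho_d rho_0 T \<longleftrightarrow>
         Kcsi alpha rho_r rho_d rho_s rho_0 T R < Kmax rho_r rho_d rho_0 T) \<and>
      (rho_r < alpha / (1 + rho_d / rho_r)^2 * (g R)^2 / R \<longleftrightarrow>
         Kcsi alpha rho_r rho_d rho_s rho_0 T R > 1))"
proof (intro allI impI)
  fix R :: real
  assume "R > 0"
  interpret csi_parameters alpha rho_r rho_d rho_s R
    using assms \<open>R > 0\<close> by unfold_locales auto
  have "1 < Kmax rho_r rho_d rho_0 T" using assms(7) by simp
  moreover have "1 < R / xp \<longleftrightarrow> xp < R" using xprime(1) by (simp add: field_simps)
  ultimately show "(R < Rmax alpha rho_r rho_d rho_0 T \<longleftrightarrow>
         R / xp < Kmax rho_r rho_d rho_0 T) \<and>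
      (R / xp < Kmax rho_r rho_d rho_0 T \<longleftrightarrow>
         Kcsi alpha rho_r rho_d rho_s rho_0 T R < Kmax rho_r rho_d rho_0 T) \<and>
      (rho_r < alpha / (1 + rho_d / rho_r)^2 * (g R)^2 / R \<longleftrightarrow>
         Kcsi alpha rho_r rho_d rho_s rho_0 T R > 1)"
    using less_Rmax_iff Kcsi_eq_clamp less_g_bound_iff by auto
qed

end
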